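(* Let $X = [X_1 \; X_2] \in \mathbb{R}^{N\times P}$ with $X_1 \in \mathbb{R}^{N\times P_1}$, $X_2\in\mathbb{R}^{N\times P_2}$, $P = P_1+P_2$, and suppose the $N$-vector of ones $\mathbf{1}$ lies in the column span of $X_1$. Consider the hierarchical normal linear regression $$\mathbf{Y}\mid \boldsymbol\beta,\Phi \sim N(X_1\boldsymbol\beta_1 + X_2\boldsymbol\beta_2,\Phi),\quad \boldsymbol\beta_1\sim N(0,C),\quad \boldsymbol\beta_2\mid\Sigma\sim N(0,\Sigma),\quad \Sigma\sim f(\Sigma),\ \Phi\sim f(\Phi),$$ where $\Sigma\in\mathbb{R}^{P_2\times P_2}$ is positive definite and $\Phi = \mathrm{diag}(\phi_1^2,\dots,\phi_N^2)$ is diagonal and positive definite; in the Bayesian setting the prior densities are such that the posterior is proper. Let $$W = XVX'\Phi^{-1},\qquad V = \left(X'\Phi^{-1}X + \begin{bmatrix} C^{-1} & 0\\ 0 & \Sigma^{-1}\end{bmatrix}\right)^{-1},$$ with $C^{-1}$ taken to be the zero matrix, and write $w_{ij}$ for the $(i,j)$ entry of $W$. For $i\in\{1,\dots,N\}$, let $x_i'$ be the $i$-th row of $X$, let $B_i = \{j\in\{1,\dots,N\}: x_j = x_i,\ \phi_j=\phi_i\}$ and $L_i = \{1,\dots,N\}\setminus B_i$, and define the shrinkage factor $b_{iB_i} = \sum_{j\in B_i} w_{ij}$ and the pooling factor $b_{iL_i} = \sum_{j\in L_i} w_{ij}$. Then for every $i$, $0 < b_{iB_i}\le 1$ and $0\le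 b_{iL_i} < 1$.
   Context: $W$ is defined for given values of $\Sigma$ and $\Phi$, and $V$ is assumed to exist (the displayed matrix is invertible). $B_i$ is the "borrower cluster" of observation $i$ (rows with identical covariates and identical noise variance) and $L_i$ the set of "lenders". *)

theory Defs
  imports "HOL-Analysis.Analysis"
begin

definition pos_def_mat :: "real^'n^'n \<Rightarrow> bool" where
  "pos_def_mat A \<longleftrightarrow> transpose A = A \<and> (\<forall>v. v \<noteq> 0 \<longrightarrow> v \<bullet> (A *v v) > 0)"

definition diag_pos_mat :: "real^'n^'n \<Rightarrow> bool" where
  "diag_pos_mat A \<longleftrightarrow> (\<forall>i j. i \<noteq> j \<longrightarrow> A $ i $ j = 0) \<and> (\<forall>i. A $ i $ i > 0)"

definition hcat :: "real^'p1^'n \<Rightarrow> real^'p2^'n \<Rightarrow> real^('p1 + 'p2)^'n" where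
  "hcat X1 X2 = (\<chi> i j. case j of Inl a \<Rightarrow> X1 $ i $ a | Inr b \<Rightarrow> X2 $ i $ b)"

text \<open>Block-diagonal prior precision diag(C^{-1}, Sig^{-1}) with C^{-1} = 0.\<close>
definition prior_prec :: "real^'p2^'p2 \<Rightarrow> real^('p1::finite + 'p2::finite)^('p1 + 'p2)" where
  "prior_prec Sig = (\<chi> a b. case (a, b) of
       (Inr p, Inr q) \<Rightarrow> matrix_inv Sig $ p $ q
     | _ \<Rightarrow> 0)"

definition Vmat :: "real^'p^'n \<Rightarrow> real^'n^'n \<Rightarrow> real^'p^'p \<Rightarrow> real^'p^'p" where
  "Vmat X Phi D = matrix_inv (transpose X ** matrix_inv Phi ** X + D)"

definition Wmat :: "real^'p^'n \<Rightarrow> real^'n^'n \<Rightarrow> real^'p^'p \<Rightarrow> real^'n^'n" where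
  "Wmat X Phi D = X ** Vmat X Phi D ** transpose X ** matrix_inv Phi"

definition borrowers :: "real^'p^'n \<Rightarrow> real^'n^'n \<Rightarrow> 'n \<Rightarrow> 'n set" where
  "borrowers X Phi i = {j. X $ j = X $ i \<and> Phi $ j $ j = Phi $ i $ i}"

definition lenders :: "real^'p^'n \<Rightarrow> real^'n^'n \<Rightarrow> 'n \<Rightarrow> 'n set" where
  "lenders X Phi i = UNIV - borrowers X Phi i"

end

theory Submission
  imports Defs
begin

(* Write M = X' Phi^-1 X + D for the posterior precision, so V = M^-1, and let D be the prior
   precision diag(0, Sigma^-1).  Since 1 = X e for some e supported on the beta_1 block, D e = 0,
   and therefore W 1 = X V (M - D) e = X e = 1: every row of W sums to 1, i.e. b_iB + b_iL = 1.
   For j in B_i the entries w_ij = x_i' V x_j / phi_j all equal q / phi_i with q = x_i' V x_i, so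
   b_iB = |B_i| q / phi_i.  Putting y = V x_i gives
     q = y' M y = sum_k (x_k' y)^2 / phi_k + y' D y >= |B_i| q^2 / phi_i,
   and q > 0 because M is positive semidefinite with no isotropic vectors outside its kernel and
   x_i <> 0; hence 0 < b_iB <= 1. *)

definition diag_mat :: "('n \<Rightarrow> 'a::zero) \<Rightarrow> 'a^'n^'n" where
  "diag_mat d = (\<chi> i j. if i = j then d i else 0)"

lemma invertible_matrix_inv:
  fixes A :: "'a::semiring_1^'n^'m"
  assumes "invertible A"
  shows "A ** matrix_inv A = mat 1" "matrix_inv A ** A = mat 1"
  using someI_ex[OF assms[unfolded invertible_def]] unfolding matrix_inv_def by auto

lemma matrix_inv_eqI:
  fixes A :: "'a::semiring_1^'n^'m"
  assumes "A ** B = mat 1" "B ** A = mat 1"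
  shows "matrix_inv A = B"
proof -
  have "invertible A" using assms unfolding invertible_def by blast
  then have "matrix_inv A = (B ** A) ** matrix_inv A" by (simp add: assms)
  also have "\<dots> = B"
    by (metis matrix_mul_assoc matrix_mul_rid invertible_matrix_inv(1)[OF \<open>invertible A\<close>])
  finally show ?thesis .
qed

lemma diag_mat_mult:
  fixes a b :: "'n::finite \<Rightarrow> 'a::semiring_1"
  shows "diag_mat a ** diag_mat b = diag_mat (\<lambda>i. a i * b i)"
  unfolding diag_mat_def matrix_matrix_mult_def
  by (auto simp: vec_eq_iff if_distrib[of "\<lambda>x. x * _"] cong: if_cong)

lemma matrix_inv_diag_mat:
  fixes d :: "'n::finite \<Rightarrow> 'a::field"
  assumes "\<And>i. d i \<noteq> 0"
  shows "matrix_inv (diag_mat d) = diag_mat (\<lambda>i. inverse (d i))"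
proof -
  have "diag_mat (\<lambda>_. 1) = (mat 1 :: 'a^'n^'n)" by (simp add: diag_mat_def mat_def)
  then show ?thesis by (intro matrix_inv_eqI) (simp_all add: diag_mat_mult assms)
qed

lemma diag_mat_mult_vector: "diag_mat d *v z = (\<chi> k. d k * z $ k)"
  unfolding diag_mat_def matrix_vector_mult_def
  by (simp add: vec_eq_iff if_distrib[of "\<lambda>x. x * _"] cong: if_cong)

lemma matrix_mul_diag_mat_nth: "(A ** diag_mat d) $ i $ j = A $ i $ j * d j"
  unfolding diag_mat_def matrix_matrix_mult_def
  by (simp add: if_distrib[of "\<lambda>x. _ * x"] cong: if_cong)

lemma diag_pos_mat_eq_diag_mat: "diag_pos_mat Phi \<Longrightarrow> Phi = diag_mat (\<lambda>i. Phi $ i $ i)"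
  by (auto simp: diag_pos_mat_def diag_mat_def vec_eq_iff)

lemma matrix_inv_diag_pos_mat:
  fixes Phi :: "real^'n::finite^'n"
  assumes "diag_pos_mat Phi"
  shows "matrix_inv Phi = diag_mat (\<lambda>i. 1 / Phi $ i $ i)"
proof -
  have "\<And>i. Phi $ i $ i \<noteq> 0" using assms unfolding diag_pos_mat_def by (metis less_irrefl)
  then show ?thesis
    by (subst diag_pos_mat_eq_diag_mat[OF assms]) (simp add: matrix_inv_diag_mat inverse_eq_divide)
qed

lemma matrix_mul_transpose_nth:
  fixes A :: "real^'m::finite^'n::finite" and C :: "real^'m^'k::finite"
  shows "(A ** B ** transpose C) $ i $ j = A $ i \<bullet> (B *v C $ j)"
  by (simp add: matrix_matrix_mult_def matrix_vector_mult_def inner_vec_def transpose_def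
      sum_distrib_left sum_distrib_right mult.assoc mult.left_commute) (rule sum.swap)

lemma sum_UNIV_sum_type:
  "(\<Sum>a\<in>UNIV. f a) = (\<Sum>a\<in>UNIV. f (Inl a)) + (\<Sum>b\<in>UNIV. f (Inr b))"
  for f :: "'a::finite + 'b::finite \<Rightarrow> 'c::comm_monoid_add"
  by (simp add: UNIV_Plus_UNIV[symmetric] sum.Plus del: UNIV_Plus_UNIV)

lemma span_columns_eq_range:
  fixes A :: "real^'n::finite^'m::finite"
  shows "span (columns A) = range ((*v) A)"
proof -
  have "range (\<lambda>i::'n. axis i (1::real)) = Basis" by (auto simp: Basis_vec_def)
  then show ?thesis by (simp add: columns_image_basis span_linear_image)
qed

lemma inner_gram_diag_pos_mat:
  fixes X :: "real^'p::finite^'n::finite"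
  assumes "diag_pos_mat Phi"
  shows "y \<bullet> ((transpose X ** matrix_inv Phi ** X) *v y)
           = (\<Sum>k\<in>UNIV. (X $ k \<bullet> y)\<^sup>2 / Phi $ k $ k)"
proof -
  have "y \<bullet> ((transpose X ** matrix_inv Phi ** X) *v y)
        = (X *v y) \<bullet> (matrix_inv Phi *v (X *v y))"
    by (metis dot_lmul_matrix inner_commute matrix_vector_mul_assoc transpose_matrix_vector)
  also have "\<dots> = (\<Sum>k\<in>UNIV. (X $ k \<bullet> y)\<^sup>2 / Phi $ k $ k)"
    unfolding matrix_inv_diag_pos_mat[OF assms] diag_mat_mult_vector
    by (simp add: inner_vec_def matrix_mult_dot[of X] power2_eq_square)
  finally show ?thesis .
qed

(* For symmetric matrices the kernel clause follows from nonnegativity; building it in avoids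
   having to prove that matrix_inv Sig is symmetric. *)
definition psd_mat :: "real^'n^'n \<Rightarrow> bool" where
  "psd_mat A \<longleftrightarrow> (\<forall>y. 0 \<le> y \<bullet> (A *v y) \<and> (y \<bullet> (A *v y) = 0 \<longrightarrow> A *v y = 0))"

lemma psd_mat_gram:
  fixes X :: "real^'p::finite^'n::finite"
  assumes Phi: "diag_pos_mat Phi"
  shows "psd_mat (transpose X ** matrix_inv Phi ** X)"
  unfolding psd_mat_def
proof (intro allI conjI impI)
  fix y
  have pos: "\<And>k. Phi $ k $ k > 0" using Phi by (simp add: diag_pos_mat_def)
  show "0 \<le> y \<bullet> ((transpose X ** matrix_inv Phi ** X) *v y)"
    unfolding inner_gram_diag_pos_mat[OF Phi] by (intro sum_nonneg) (simp add: pos less_imp_le)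
  assume "y \<bullet> ((transpose X ** matrix_inv Phi ** X) *v y) = 0"
  then have "\<forall>k\<in>UNIV. (X $ k \<bullet> y)\<^sup>2 / Phi $ k $ k = 0"
    unfolding inner_gram_diag_pos_mat[OF Phi]
    by (subst (asm) sum_nonneg_eq_0_iff) (simp_all add: pos less_imp_le)
  moreover have "Phi $ k $ k \<noteq> 0" for k using pos[of k] by simp
  ultimately have "X $ k \<bullet> y = 0" for k by simp
  then have "X *v y = 0" by (simp add: matrix_mult_dot vec_eq_iff)
  then show "(transpose X ** matrix_inv Phi ** X) *v y = 0" by (simp flip: matrix_vector_mul_assoc)
qed

lemma psd_mat_add:
  assumes "psd_mat A" "psd_mat B"
  shows "psd_mat (A + B)"
  unfolding psd_mat_def
proof
  fix y
  have "0 \<le> y \<bullet> (A *v y)" "0 \<le> y \<bullet> (B *v y)" using assms by (simp_all add: psd_mat_def)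
  moreover have "A *v y = 0 \<and> B *v y = 0" if "y \<bullet> (A *v y) = 0 \<and> y \<bullet> (B *v y) = 0"
    using that assms by (simp add: psd_mat_def)
  ultimately show "0 \<le> y \<bullet> ((A + B) *v y) \<and> (y \<bullet> ((A + B) *v y) = 0 \<longrightarrow> (A + B) *v y = 0)"
    by (auto simp: matrix_vector_mult_add_rdistrib inner_add_right add_nonneg_eq_0_iff)
qed

lemma psd_mat_matrix_inv_quadratic_pos:
  fixes M :: "real^'n::finite^'n"
  assumes "invertible M" "psd_mat M" "x \<noteq> 0"
  shows "0 < x \<bullet> (matrix_inv M *v x)"
proof -
  define y where "y = matrix_inv M *v x"
  have My: "M *v y = x"
    by (simp add: y_def matrix_vector_mul_assoc invertible_matrix_inv[OF assms(1)])
  then have "x \<bullet> y = y \<bullet> (M *v y)" by (simp add: inner_commute)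
  moreover have "y \<bullet> (M *v y) \<noteq> 0" using assms(2,3) My unfolding psd_mat_def by metis
  ultimately show ?thesis using assms(2) unfolding psd_mat_def y_def by (metis order_le_neq_trans)
qed

lemma pos_def_mat_invertible:
  fixes A :: "real^'n::finite^'n"
  assumes "pos_def_mat A"
  shows "invertible A"
proof -
  have "inj ((*v) A)"
  proof (rule injI)
    fix a b assume "A *v a = A *v b"
    then have "(a - b) \<bullet> (A *v (a - b)) = 0" by (simp add: matrix_vector_mult_diff_distrib)
    then show "a = b" using assms unfolding pos_def_mat_def by (metis less_irrefl right_minus_eq)
  qed
  then show ?thesis using matrix_left_invertible_injective invertible_left_inverse by blast
qed

lemma pos_def_mat_psd_mat:
  assumes "pos_def_mat A"
  shows "psd_mat A"
  unfolding psd_mat_def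
proof
  fix y
  show "0 \<le> y \<bullet> (A *v y) \<and> (y \<bullet> (A *v y) = 0 \<longrightarrow> A *v y = 0)"
  proof (cases "y = 0")
    case False
    then have "0 < y \<bullet> (A *v y)" using assms by (simp add: pos_def_mat_def)
    then show ?thesis by simp
  qed simp
qed

definition posterior_prec :: "real^'p^'n \<Rightarrow> real^'n^'n \<Rightarrow> real^'p^'p \<Rightarrow> real^'p^'p" where
  "posterior_prec X Phi D = transpose X ** matrix_inv Phi ** X + D"

lemma Vmat_eq: "Vmat X Phi D = matrix_inv (posterior_prec X Phi D)"
  by (simp add: Vmat_def posterior_prec_def)

lemma Wmat_nth:
  fixes X :: "real^'p::finite^'n::finite"
  assumes "diag_pos_mat Phi"
  shows "Wmat X Phi D $ i $ j = X $ i \<bullet> (Vmat X Phi D *v X $ j) / Phi $ j $ j"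
  by (simp add: Wmat_def matrix_inv_diag_pos_mat[OF assms] matrix_mul_diag_mat_nth
      matrix_mul_transpose_nth)

lemma Wmat_mult_ones:
  fixes X :: "real^'p::finite^'n::finite"
  assumes ones: "X *v e = vec 1" and "D *v e = 0"
    and inv: "invertible (posterior_prec X Phi D)"
  shows "Wmat X Phi D *v vec 1 = vec 1"
proof -
  have "Wmat X Phi D *v (X *v e)
        = (X ** Vmat X Phi D) *v ((transpose X ** matrix_inv Phi ** X) *v e)"
    by (simp add: Wmat_def matrix_vector_mul_assoc matrix_mul_assoc)
  also have "\<dots> = (X ** Vmat X Phi D) *v (posterior_prec X Phi D *v e)"
    using assms by (simp add: posterior_prec_def matrix_vector_mult_add_rdistrib)
  also have "\<dots> = X *v ((Vmat X Phi D ** posterior_prec X Phi D) *v e)"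
    by (simp add: matrix_vector_mul_assoc matrix_mul_assoc)
  also have "\<dots> = X *v e"
    by (simp add: Vmat_eq invertible_matrix_inv[OF inv])
  finally show ?thesis using ones by simp
qed

lemma borrower_weight_bounds:
  fixes X :: "real^'p::finite^'n::finite" and i :: 'n
  assumes Phi: "diag_pos_mat Phi" and D: "psd_mat D"
    and ones: "X *v e = vec 1"
    and inv: "invertible (posterior_prec X Phi D)"
  defines "q \<equiv> X $ i \<bullet> (Vmat X Phi D *v X $ i)"
  shows "0 < q" and "real (card (borrowers X Phi i)) * q / Phi $ i $ i \<le> 1"
proof -
  let ?M = "posterior_prec X Phi D" and ?B = "borrowers X Phi i"
  have M: "psd_mat ?M"
    unfolding posterior_prec_def by (intro psd_mat_add psd_mat_gram Phi D)
  have "X $ i \<bullet> e = 1" using ones by (simp add: matrix_mult_dot vec_eq_iff)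
  then have "X $ i \<noteq> 0" by auto
  then show "0 < q" unfolding q_def Vmat_eq by (rule psd_mat_matrix_inv_quadratic_pos[OF inv M])
  have pos: "\<And>k. Phi $ k $ k > 0" using Phi by (simp add: diag_pos_mat_def)
  define y where "y = Vmat X Phi D *v X $ i"
  have "?M *v y = X $ i"
    by (simp add: y_def Vmat_eq matrix_vector_mul_assoc invertible_matrix_inv[OF inv])
  then have "q = y \<bullet> (?M *v y)" by (simp add: q_def y_def inner_commute)
  also have "\<dots> = (\<Sum>k\<in>UNIV. (X $ k \<bullet> y)\<^sup>2 / Phi $ k $ k) + y \<bullet> (D *v y)"
    by (simp add: posterior_prec_def matrix_vector_mult_add_rdistrib inner_add_right
        inner_gram_diag_pos_mat[OF Phi])
  also have "\<dots> \<ge> (\<Sum>k\<in>?B. (X $ k \<bullet> y)\<^sup>2 / Phi $ k $ k)"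
    using D pos by (intro add_increasing2 sum_mono2) (auto simp: psd_mat_def less_imp_le)
  also have "(\<Sum>k\<in>?B. (X $ k \<bullet> y)\<^sup>2 / Phi $ k $ k) = card ?B * q\<^sup>2 / Phi $ i $ i"
    by (simp add: borrowers_def q_def y_def)
  finally have "card ?B * q\<^sup>2 / Phi $ i $ i \<le> q" .
  with \<open>0 < q\<close> pos[of i] show "card ?B * q / Phi $ i $ i \<le> 1"
    by (simp add: power2_eq_square field_simps)
qed

lemma shrinkage_pooling_factor_bounds:
  fixes X :: "real^'p::finite^'n::finite" and i :: 'n
  assumes Phi: "diag_pos_mat Phi" and D: "psd_mat D"
    and ones: "X *v e = vec 1" and "D *v e = 0"
    and inv: "invertible (posterior_prec X Phi D)"
  defines "bB \<equiv> \<Sum>j\<in>borrowers X Phi i. Wmat X Phi D $ i $ j"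
    and "bL \<equiv> \<Sum>j\<in>lenders X Phi i. Wmat X Phi D $ i $ j"
  shows "0 < bB \<and> bB \<le> 1 \<and> 0 \<le> bL \<and> bL < 1"
proof -
  let ?B = "borrowers X Phi i"
  define q where "q = X $ i \<bullet> (Vmat X Phi D *v X $ i)"
  have "bB = real (card ?B) * q / Phi $ i $ i"
    by (simp add: bB_def q_def Wmat_nth[OF Phi] borrowers_def)
  moreover have "i \<in> ?B" by (simp add: borrowers_def)
  then have "0 < real (card ?B)" by (auto simp: card_gt_0_iff)
  moreover have "0 < Phi $ i $ i" using Phi by (simp add: diag_pos_mat_def)
  ultimately have "0 < bB" "bB \<le> 1"
    using borrower_weight_bounds[OF Phi D ones inv, of i] by (simp_all add: q_def)
  moreover have "bB + bL = 1"
  proof -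
    have "(\<Sum>j\<in>UNIV. Wmat X Phi D $ i $ j) = 1"
      using arg_cong[OF Wmat_mult_ones[OF assms(3-5)], of "\<lambda>v. v $ i"]
      by (simp add: matrix_vector_mult_def)
    then show ?thesis
      unfolding bB_def bL_def lenders_def by (metis finite sum.subset_diff top_greatest add.commute)
  qed
  ultimately show ?thesis by linarith
qed

lemma prior_prec_mult_vector:
  "(prior_prec Sig :: real^('p1::finite + 'p2::finite)^('p1 + 'p2)) *v y
     = (\<chi> a. case a of Inl _ \<Rightarrow> 0 | Inr p \<Rightarrow> (matrix_inv Sig *v (\<chi> q. y $ Inr q)) $ p)"
  by (simp add: vec_eq_iff matrix_vector_mult_def prior_prec_def sum_UNIV_sum_type
      split: sum.split)

lemma inner_prior_prec:
  "y \<bullet> ((prior_prec Sig :: real^('p1::finite + 'p2::finite)^('p1 + 'p2)) *v y)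
     = (\<chi> q. y $ Inr q) \<bullet> (matrix_inv Sig *v (\<chi> q. y $ Inr q))"
  by (simp add: prior_prec_mult_vector inner_vec_def sum_UNIV_sum_type)

lemma prior_prec_mult_vector_eq_0:
  assumes "(\<chi> q. y $ Inr q) = 0"
  shows "(prior_prec Sig :: real^('p1::finite + 'p2::finite)^('p1 + 'p2)) *v y = 0"
  unfolding prior_prec_mult_vector assms matrix_vector_mult_0_right
  by (simp add: vec_eq_iff split: sum.split)

lemma psd_mat_prior_prec:
  fixes Sig :: "real^'p2::finite^'p2"
  assumes "pos_def_mat Sig"
  shows "psd_mat (prior_prec Sig :: real^('p1::finite + 'p2)^('p1 + 'p2))"
  unfolding psd_mat_def
proof
  fix y :: "real^('p1 + 'p2)"
  let ?D = "prior_prec Sig :: real^('p1 + 'p2)^('p1 + 'p2)"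
  show "0 \<le> y \<bullet> (?D *v y) \<and> (y \<bullet> (?D *v y) = 0 \<longrightarrow> ?D *v y = 0)"
  proof (cases "(\<chi> q. y $ Inr q) = 0")
    case True
    then have "?D *v y = 0" by (rule prior_prec_mult_vector_eq_0)
    then show ?thesis by simp
  next
    case False
    then have "0 < y \<bullet> (?D *v y)"
      unfolding inner_prior_prec using assms
      by (intro psd_mat_matrix_inv_quadratic_pos pos_def_mat_invertible pos_def_mat_psd_mat)
    then show ?thesis by (simp add: less_imp_le)
  qed
qed

lemma hcat_mult_Inl_vector:
  "hcat X1 X2 *v (\<chi> a. case a of Inl p \<Rightarrow> c $ p | Inr _ \<Rightarrow> 0) = X1 *v c"
  by (simp add: vec_eq_iff matrix_vector_mult_def hcat_def sum_UNIV_sum_type)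

theorem theorem2:
  fixes X1 :: "real^'p1::finite^'n::finite"
    and X2 :: "real^'p2::finite^'n"
    and Sig :: "real^'p2^'p2"
    and Phi :: "real^'n^'n"
  assumes ones: "(vec 1 :: real^'n) \<in> span (columns X1)"
    and Sigma_pd: "pos_def_mat Sig"
    and Phi_pd: "diag_pos_mat Phi"
    and V_exists: "invertible (transpose (hcat X1 X2) ** matrix_inv Phi ** hcat X1 X2
                      + (prior_prec Sig :: real^('p1 + 'p2)^('p1 + 'p2)))"
  shows "\<forall>i. let X = hcat X1 X2; W = Wmat X Phi (prior_prec Sig :: real^('p1 + 'p2)^('p1 + 'p2));
               bB = (\<Sum>j\<in>borrowers X Phi i. W $ i $ j);
               bL = (\<Sum>j\<in>lenders X Phi i. W $ i $ j)
             in 0 < bB \<and> bB \<le> 1 \<and> 0 \<le> bL \<and> bL < 1"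
proof -
  let ?D = "prior_prec Sig :: real^('p1 + 'p2)^('p1 + 'p2)"
  obtain c where c: "X1 *v c = vec 1" using ones by (auto simp: span_columns_eq_range)
  define e :: "real^('p1 + 'p2)" where "e = (\<chi> a. case a of Inl p \<Rightarrow> c $ p | Inr _ \<Rightarrow> 0)"
  have "hcat X1 X2 *v e = vec 1" using c by (simp add: e_def hcat_mult_Inl_vector)
  moreover have "?D *v e = 0" by (rule prior_prec_mult_vector_eq_0) (simp add: e_def vec_eq_iff)
  moreover note V_exists[folded posterior_prec_def]
  ultimately show ?thesis
    unfolding Let_def
    using shrinkage_pooling_factor_bounds[OF Phi_pd psd_mat_prior_prec[OF Sigma_pd]] by blast
qed

end
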